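(* Consider the mining game with $N\ge2$ miners, costs $0<c_1\le\dots\le c_N$, reward $R>0$ and capacity $\gamma\ge0$, at parameter values where the number $n$ of active miners does not change under small perturbations of the costs. For active miners $i\ne j$, the equilibrium profit $\pi_i^*$ of miner $i$ satisfies $$\frac{\partial\pi_i^*}{\partial c_i}<0,\qquad \frac{\partial\pi_i^*}{\partial c_j}>0.$$
   Context: Mining game: $N\ge2$ miners with costs-per-hash $0<c_1\le\dots\le c_N$; each miner $i$ chooses $h_i\ge0$, $H=\sum_jh_j$, payoff $\frac{h_i}{H}R-c_ih_i-\frac{\gamma}{2}h_i^2$ if $H>0$ and $0$ if $H=0$. The pure Nash equilibrium $h^*$ is unique; its active miners ($h_i^*>0$) are $1,\dots,n$ for some $2\le n\le N$, with $c^{(n)}=\sum_{i=1}^nc_i$, $H^*=\frac{\sqrt{(c^{(n)})^2+4(n-1)R\gamma}-c^{(n)}}{2\gamma}$ for $\gamma>0$ (and $(n-1)R/c^{(n)}$ for $\gamma=0$), and $h_i^*=H^*\frac{R-c_iH^*}{R+\gamma(H^* )^2}$ for $i\le n$. The equilibrium profit is $\pi_i^*=\frac{R}{H^*}h_i^*-c_ih_i^*-\frac{\gamma}{2}(h_i^* )^2$, and derivatives are taken of these closed-form expressions with $n$ held fixed. *)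

theory Defs
  imports Complex_Main
begin

definition payoff :: "nat \<Rightarrow> real \<Rightarrow> real \<Rightarrow> (nat \<Rightarrow> real) \<Rightarrow> (nat \<Rightarrow> real) \<Rightarrow> nat \<Rightarrow> real" where
  "payoff N R \<gamma> c h i =
     (let H = (\<Sum>j=1..N. h j) in
      if H > 0 then h i / H * R - c i * h i - \<gamma> / 2 * (h i)^2 else 0)"

definition is_nash :: "nat \<Rightarrow> real \<Rightarrow> real \<Rightarrow> (nat \<Rightarrow> real) \<Rightarrow> (nat \<Rightarrow> real) \<Rightarrow> bool" where
  "is_nash N R \<gamma> c h \<longleftrightarrow>
     (\<forall>i\<in>{1..N}. h i \<ge> 0) \<and>
     (\<forall>i\<in>{1..N}. \<forall>x\<ge>0. payoff N R \<gamma> c (h(i := x)) i \<le> payoff N R \<gamma> c h i)"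

definition cost_sum :: "nat \<Rightarrow> (nat \<Rightarrow> real) \<Rightarrow> real" where
  "cost_sum n c = (\<Sum>i=1..n. c i)"

definition H_star :: "nat \<Rightarrow> real \<Rightarrow> real \<Rightarrow> (nat \<Rightarrow> real) \<Rightarrow> real" where
  "H_star n R \<gamma> c =
     (if \<gamma> > 0
      then (sqrt ((cost_sum n c)^2 + 4 * (real n - 1) * R * \<gamma>) - cost_sum n c) / (2 * \<gamma>)
      else (real n - 1) * R / cost_sum n c)"

definition h_star :: "nat \<Rightarrow> real \<Rightarrow> real \<Rightarrow> (nat \<Rightarrow> real) \<Rightarrow> nat \<Rightarrow> real" where
  "h_star n R \<gamma> c i =
     (let H = H_star n R \<gamma> c in H * (R - c i * H) / (R + \<gamma> * H^2))"

definition pi_star :: "nat \<Rightarrow> real \<Rightarrow> real \<Rightarrow> (nat \<Rightarrow> real) \<Rightarrow> nat \<Rightarrow> real" where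
  "pi_star n R \<gamma> c i =
     (let H = H_star n R \<gamma> c; h = h_star n R \<gamma> c i in
      R / H * h - c i * h - \<gamma> / 2 * h^2)"

end

theory Submission
  imports Defs
begin

(* With H = H^*, the equilibrium profit is pi_i^* = (R - c_i H)^2 (2R + gamma H^2) / (2 (R + gamma H^2)^2).
   H depends on the costs only through c^(n), with dH/dc^(n) = -H / (2 gamma H + c^(n)) < 0, and
   pi_i^* decreases in H as long as R - c_i H > 0, i.e. h_i^* > 0; so a rival's higher cost raises
   pi_i^*. For the own cost, the direct loss outweighs the gain through H: after factoring out a
   positive term, the sign of the total derivative is that of
     gamma H ((R - c_i H)(3R + gamma H^2) - 2 (R + gamma H^2)(2R + gamma H^2))
       - (R + gamma H^2)(2R + gamma H^2)(c^(n) - c_i).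
   The first term is <= 0 because 0 < R - c_i H <= R, and the second is < 0 because the other
   active miners have positive costs. *)

definition profit :: "real \<Rightarrow> real \<Rightarrow> real \<Rightarrow> real \<Rightarrow> real" where
  "profit R \<gamma> c H = (R - c * H)^2 * (2 * R + \<gamma> * H^2) / (2 * (R + \<gamma> * H^2)^2)"

definition profit_dc :: "real \<Rightarrow> real \<Rightarrow> real \<Rightarrow> real \<Rightarrow> real" where
  "profit_dc R \<gamma> c H = - H * (R - c * H) * (2 * R + \<gamma> * H^2) / (R + \<gamma> * H^2)^2"

definition profit_dH :: "real \<Rightarrow> real \<Rightarrow> real \<Rightarrow> real \<Rightarrow> real" where
  "profit_dH R \<gamma> c H =
     - c * (R - c * H) * (2 * R + \<gamma> * H^2) / (R + \<gamma> * H^2)^2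
     - \<gamma> * H * (R - c * H)^2 * (3 * R + \<gamma> * H^2) / (R + \<gamma> * H^2)^3"

lemma reward_plus_capacity_pos:
  fixes R \<gamma> H :: real
  shows "R > 0 \<Longrightarrow> \<gamma> \<ge> 0 \<Longrightarrow> R + \<gamma> * H^2 > 0"
  by (intro add_pos_nonneg mult_nonneg_nonneg) auto

lemma payoff_closed_form:
  fixes R \<gamma> c H :: real
  assumes "H \<noteq> 0" and "R + \<gamma> * H^2 \<noteq> 0"
  defines "h \<equiv> H * (R - c * H) / (R + \<gamma> * H^2)"
  shows "R / H * h - c * h - \<gamma> / 2 * h^2 = profit R \<gamma> c H"
proof -
  define a where "a = R - c * H"
  define u where "u = R + \<gamma> * H^2"
  have u: "u \<noteq> 0" using assms(2) unfolding u_def .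
  have h: "h = H * a / u" unfolding h_def a_def u_def ..
  have "R / H * h - c * h = (R - c * H) * a / u"
    using assms(1) u unfolding h by (simp add: field_simps)
  then have "R / H * h - c * h - \<gamma> / 2 * h^2 = a^2 * (2 * u - \<gamma> * H^2) / (2 * u^2)"
    using u unfolding h a_def[symmetric] by (simp add: field_simps power2_eq_square)
  moreover have "2 * u - \<gamma> * H^2 = 2 * R + \<gamma> * H^2" unfolding u_def by simp
  ultimately show ?thesis unfolding profit_def a_def u_def by simp
qed

lemma pi_star_eq_profit:
  assumes "R > 0" and "\<gamma> \<ge> 0" and "H_star n R \<gamma> c > 0"
  shows "pi_star n R \<gamma> c i = profit R \<gamma> (c i) (H_star n R \<gamma> c)"
proof -
  have "R + \<gamma> * (H_star n R \<gamma> c)^2 \<noteq> 0"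
    using reward_plus_capacity_pos[OF assms(1,2), of "H_star n R \<gamma> c"] by linarith
  then show ?thesis
    using payoff_closed_form[of "H_star n R \<gamma> c" R \<gamma> "c i"] assms(3)
    unfolding pi_star_def h_star_def Let_def by simp
qed

lemma h_star_pos_imp_margin_pos:
  assumes "R > 0" and "\<gamma> \<ge> 0" and "H_star n R \<gamma> c > 0" and "h_star n R \<gamma> c i > 0"
  shows "c i * H_star n R \<gamma> c < R"
proof -
  have "R + \<gamma> * (H_star n R \<gamma> c)^2 > 0" using reward_plus_capacity_pos[OF assms(1,2)] .
  then show ?thesis
    using assms(3,4) unfolding h_star_def Let_def by (simp add: zero_less_divide_iff zero_less_mult_iff)
qed

lemma has_real_derivative_profit_weight:
  fixes R \<gamma> H :: real
  assumes "R + \<gamma> * H^2 \<noteq> 0"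
  shows "((\<lambda>H. (2 * R + \<gamma> * H^2) / (R + \<gamma> * H^2)^2) has_real_derivative
           - 2 * \<gamma> * H * (3 * R + \<gamma> * H^2) / (R + \<gamma> * H^2)^3) (at H)"
proof -
  define u where "u = R + \<gamma> * H^2"
  have "((\<lambda>H. (2 * R + \<gamma> * H^2) / (R + \<gamma> * H^2)^2) has_real_derivative
          (2 * \<gamma> * H * u^2 - (2 * R + \<gamma> * H^2) * (2 * u * (2 * \<gamma> * H))) / (u^2)^2) (at H)"
    using assms unfolding u_def by (auto intro!: derivative_eq_intros)
  moreover have "(2 * \<gamma> * H * u^2 - (2 * R + \<gamma> * H^2) * (2 * u * (2 * \<gamma> * H))) / (u^2)^2
      = - 2 * \<gamma> * H * (3 * R + \<gamma> * H^2) / u^3"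
  proof -
    have u: "u \<noteq> 0" using assms unfolding u_def .
    have v: "2 * R + \<gamma> * H^2 = u + R" "3 * R + \<gamma> * H^2 = u + 2 * R" unfolding u_def by simp_all
    have num: "2 * \<gamma> * H * u^2 - (u + R) * (2 * u * (2 * \<gamma> * H))
        = u * (- 2 * \<gamma> * H * (u + 2 * R))"
      by (simp add: algebra_simps power2_eq_square)
    show ?thesis unfolding v num using u by (simp add: power2_eq_square power3_eq_cube)
  qed
  ultimately show ?thesis unfolding u_def by simp
qed

lemma has_real_derivative_profit:
  assumes f: "(f has_real_derivative f') (at x)" and g: "(g has_real_derivative g') (at x)"
    and nz: "R + \<gamma> * (g x)^2 \<noteq> 0"
  shows "((\<lambda>y. profit R \<gamma> (f y) (g y)) has_real_derivative
           profit_dc R \<gamma> (f x) (g x) * f' + profit_dH R \<gamma> (f x) (g x) * g') (at x)"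
proof -
  define W where "W = (\<lambda>H. (2 * R + \<gamma> * H^2) / (R + \<gamma> * H^2)^2)"
  define W' where "W' = - 2 * \<gamma> * g x * (3 * R + \<gamma> * (g x)^2) / (R + \<gamma> * (g x)^2)^3"
  define a where "a = R - f x * g x"
  have "(W has_real_derivative W') (at (g x))"
    unfolding W_def W'_def by (rule has_real_derivative_profit_weight[OF nz])
  from DERIV_chain2[OF this g] have Wg: "((\<lambda>y. W (g y)) has_real_derivative W' * g') (at x)" .
  have "((\<lambda>y. (R - f y * g y)^2 / 2) has_real_derivative a * (- (f' * g x + f x * g'))) (at x)"
    unfolding a_def by (auto intro!: derivative_eq_intros f g)
  from DERIV_mult[OF this Wg]
  have deriv: "((\<lambda>y. (R - f y * g y)^2 / 2 * W (g y)) has_real_derivative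
      a * (- (f' * g x + f x * g')) * W (g x) + W' * g' * (a^2 / 2)) (at x)"
    unfolding a_def .
  have profit_eq: "(\<lambda>y. profit R \<gamma> (f y) (g y)) = (\<lambda>y. (R - f y * g y)^2 / 2 * W (g y))"
    unfolding profit_def W_def by simp
  have dc: "profit_dc R \<gamma> (f x) (g x) = - g x * a * W (g x)"
    unfolding profit_dc_def W_def a_def by simp
  have dH: "profit_dH R \<gamma> (f x) (g x) = - f x * a * W (g x) + a^2 / 2 * W'"
    using nz unfolding profit_dH_def W_def W'_def a_def by (simp add: field_simps)
  have "profit_dc R \<gamma> (f x) (g x) * f' + profit_dH R \<gamma> (f x) (g x) * g'
      = a * (- (f' * g x + f x * g')) * W (g x) + W' * g' * (a^2 / 2)"
    unfolding dc dH by (simp add: algebra_simps)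
  then show ?thesis unfolding profit_eq using deriv by simp
qed

lemma profit_dH_neg:
  assumes "R > 0" and "\<gamma> \<ge> 0" and "H \<ge> 0" and "c > 0" and "c * H < R"
  shows "profit_dH R \<gamma> c H < 0"
proof -
  have u: "R + \<gamma> * H^2 > 0" using reward_plus_capacity_pos[OF assms(1,2)] .
  have "c * (R - c * H) * (2 * R + \<gamma> * H^2) / (R + \<gamma> * H^2)^2 > 0"
    using assms u by (intro divide_pos_pos mult_pos_pos add_pos_nonneg) auto
  moreover have "\<gamma> * H * (R - c * H)^2 * (3 * R + \<gamma> * H^2) / (R + \<gamma> * H^2)^3 \<ge> 0"
    using assms u by (intro divide_nonneg_pos mult_nonneg_nonneg add_nonneg_nonneg) auto
  ultimately show ?thesis unfolding profit_dH_def by linarith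
qed

lemma profit_own_cost_derivative_neg:
  assumes "R > 0" and "\<gamma> \<ge> 0" and "H > 0" and "c \<ge> 0" and "c * H < R" and "S > 0"
  shows "profit_dc R \<gamma> c H + profit_dH R \<gamma> c H * (- H / (2 * \<gamma> * H + (c + S))) < 0"
proof -
  define a where "a = R - c * H"
  define u where "u = R + \<gamma> * H^2"
  define v where "v = 2 * R + \<gamma> * H^2"
  define w where "w = 3 * R + \<gamma> * H^2"
  define Q where "Q = 2 * \<gamma> * H + (c + S)"
  have "a > 0" "a \<le> R" using assms unfolding a_def by simp_all
  have "u > 0" unfolding u_def using reward_plus_capacity_pos[OF assms(1,2)] .
  have "Q > 0" using assms unfolding Q_def by (simp add: add_nonneg_pos)
  have "\<gamma> * H \<ge> 0" "\<gamma> * H^2 \<ge> 0" using assms by simp_all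
  define B where "B = - (v * u * (Q - c)) + \<gamma> * H * a * w"
  have factor: "profit_dc R \<gamma> c H + profit_dH R \<gamma> c H * (- H / Q) = a * H / (Q * u^3) * B"
    using \<open>u > 0\<close> \<open>Q > 0\<close>
    unfolding profit_dc_def profit_dH_def a_def[symmetric] u_def[symmetric] v_def[symmetric]
      w_def[symmetric] B_def
    by (simp add: field_simps power2_eq_square power3_eq_cube)
  have "a * w \<le> R * w" using \<open>a \<le> R\<close> assms(1,2) unfolding w_def by (intro mult_right_mono) auto
  also have "R * w \<le> 2 * u * v"
  proof -
    have "2 * u * v - R * w = R^2 + 5 * R * (\<gamma> * H^2) + 2 * (\<gamma> * H^2)^2"
      unfolding u_def v_def w_def by (simp add: algebra_simps power2_eq_square)
    moreover have "R^2 + 5 * R * (\<gamma> * H^2) + 2 * (\<gamma> * H^2)^2 \<ge> 0"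
      using assms(1,2) by (intro add_nonneg_nonneg mult_nonneg_nonneg) auto
    ultimately show ?thesis by linarith
  qed
  finally have "\<gamma> * H * (a * w) \<le> \<gamma> * H * (2 * u * v)"
    using \<open>\<gamma> * H \<ge> 0\<close> by (rule mult_left_mono)
  moreover have "v * u * S > 0"
  proof -
    have "v > 0" using \<open>\<gamma> * H^2 \<ge> 0\<close> assms(1) unfolding v_def by linarith
    then show ?thesis using \<open>u > 0\<close> assms(6) by simp
  qed
  moreover have "Q - c = 2 * \<gamma> * H + S" unfolding Q_def by simp
  ultimately have "B < 0" unfolding B_def by (simp add: algebra_simps)
  moreover have "a * H / (Q * u^3) > 0" using \<open>a > 0\<close> \<open>u > 0\<close> \<open>Q > 0\<close> assms(3) by simp
  ultimately show ?thesis unfolding Q_def[symmetric] factor by (rule mult_pos_neg[rotated])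
qed

lemma cost_sum_remove:
  assumes "k \<in> {1..n}"
  shows "cost_sum n c = c k + (\<Sum>l\<in>{1..n} - {k}. c l)"
  unfolding cost_sum_def using sum.remove[OF finite_atLeastAtMost assms] .

lemma cost_sum_fun_upd:
  assumes "k \<in> {1..n}"
  shows "cost_sum n (c(k := x)) = x + (cost_sum n c - c k)"
proof -
  have "(\<Sum>l\<in>{1..n} - {k}. (c(k := x)) l) = (\<Sum>l\<in>{1..n} - {k}. c l)"
    by (rule sum.cong) auto
  then show ?thesis
    using cost_sum_remove[OF assms, of c] cost_sum_remove[OF assms, of "c(k := x)"] by simp
qed

lemma cost_sum_minus_pos:
  assumes "\<forall>l\<in>{1..n}. c l > 0" and "2 \<le> n" and "k \<in> {1..n}"
  shows "cost_sum n c - c k > 0"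
proof -
  define m :: nat where "m = (if k = 1 then 2 else 1)"
  have "m \<in> {1..n} - {k}" using assms(2,3) unfolding m_def by auto
  then have "(\<Sum>l\<in>{1..n} - {k}. c l) > 0"
    using assms(1) by (intro sum_pos) auto
  then show ?thesis using cost_sum_remove[OF assms(3)] by simp
qed

lemma H_star_pos:
  assumes "R > 0" and "\<gamma> \<ge> 0" and "2 \<le> n" and "cost_sum n c > 0"
  shows "H_star n R \<gamma> c > 0"
proof (cases "\<gamma> > 0")
  case True
  define C where "C = cost_sum n c"
  have "C^2 < C^2 + 4 * (real n - 1) * R * \<gamma>" using assms True by simp
  then have "sqrt (C^2) < sqrt (C^2 + 4 * (real n - 1) * R * \<gamma>)"
    by (rule real_sqrt_less_mono)
  then show ?thesis using True unfolding H_star_def C_def[symmetric] by simp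
next
  case False
  then show ?thesis using assms unfolding H_star_def by simp
qed

lemma has_real_derivative_H_star:
  assumes "R > 0" and "\<gamma> \<ge> 0" and "2 \<le> n" and "cost_sum n c > 0" and "k \<in> {1..n}"
  defines "H \<equiv> H_star n R \<gamma> c" and "C \<equiv> cost_sum n c"
  shows "((\<lambda>x. H_star n R \<gamma> (c(k := x))) has_real_derivative - H / (2 * \<gamma> * H + C)) (at (c k))"
proof -
  define S where "S = C - c k"
  have upd: "cost_sum n (c(k := x)) = x + S" for x
    unfolding S_def C_def using cost_sum_fun_upd[OF assms(5)] .
  have S: "c k + S = C" unfolding S_def by simp
  have "C > 0" "H > 0" using H_star_pos[OF assms(1-4)] assms(4) unfolding H_def C_def by auto
  show ?thesis
  proof (cases "\<gamma> > 0")
    case True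
    define K where "K = 4 * (real n - 1) * R * \<gamma>"
    have "C^2 + K > 0" using assms True \<open>C > 0\<close> unfolding K_def by (simp add: add_pos_nonneg)
    have sqrt_eq: "sqrt (C^2 + K) = 2 * \<gamma> * H + C"
      using True unfolding H_def H_star_def C_def[symmetric] K_def by simp
    have fun_eq: "(\<lambda>x. H_star n R \<gamma> (c(k := x))) = (\<lambda>x. (sqrt ((x + S)^2 + K) - (x + S)) / (2 * \<gamma>))"
      using True unfolding H_star_def upd K_def by simp
    have "(sqrt has_real_derivative inverse (2 * \<gamma> * H + C) / 2) (at ((c k + S)^2 + K))"
      using DERIV_real_sqrt[OF \<open>C^2 + K > 0\<close>] unfolding S sqrt_eq .
    moreover have "((\<lambda>x. (x + S)^2 + K) has_real_derivative 2 * C) (at (c k))"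
      unfolding S[symmetric] by (auto intro!: derivative_eq_intros)
    ultimately have "((\<lambda>x. sqrt ((x + S)^2 + K)) has_real_derivative
        inverse (2 * \<gamma> * H + C) / 2 * (2 * C)) (at (c k))"
      by (rule DERIV_chain2)
    moreover have "((\<lambda>x. x + S) has_real_derivative 1) (at (c k))"
      by (auto intro!: derivative_eq_intros)
    ultimately have "((\<lambda>x. (sqrt ((x + S)^2 + K) - (x + S)) / (2 * \<gamma>)) has_real_derivative
        (inverse (2 * \<gamma> * H + C) / 2 * (2 * C) - 1) / (2 * \<gamma>)) (at (c k))"
      by (intro DERIV_cdivide DERIV_diff)
    moreover have "(inverse (2 * \<gamma> * H + C) / 2 * (2 * C) - 1) / (2 * \<gamma>) = - H / (2 * \<gamma> * H + C)"
    proof -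
      have "2 * \<gamma> * H > 0" using True \<open>H > 0\<close> by simp
      then have s: "2 * \<gamma> * H + C \<noteq> 0" using \<open>C > 0\<close> by linarith
      have "inverse (2 * \<gamma> * H + C) / 2 * (2 * C) - 1 = - (2 * \<gamma>) * H / (2 * \<gamma> * H + C)"
        using s by (simp add: field_simps)
      then show ?thesis using True by simp
    qed
    ultimately show ?thesis unfolding fun_eq by simp
  next
    case False
    then have "\<gamma> = 0" using assms(2) by simp
    have fun_eq: "(\<lambda>x. H_star n R \<gamma> (c(k := x))) = (\<lambda>x. (real n - 1) * R / (x + S))"
      using \<open>\<gamma> = 0\<close> unfolding H_star_def upd by simp
    have "((\<lambda>x. (real n - 1) * R / (x + S)) has_real_derivative - ((real n - 1) * R) / C^2) (at (c k))"
      using \<open>C > 0\<close> unfolding S[symmetric] by (auto intro!: derivative_eq_intros simp: power2_eq_square)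
    moreover have "- ((real n - 1) * R) / C^2 = - H / (2 * \<gamma> * H + C)"
      using \<open>\<gamma> = 0\<close> unfolding H_def H_star_def C_def by (simp add: power2_eq_square)
    ultimately show ?thesis unfolding fun_eq by simp
  qed
qed

lemma has_real_derivative_pi_star:
  assumes "R > 0" and "\<gamma> \<ge> 0" and "2 \<le> n" and "cost_sum n c > 0" and "k \<in> {1..n}"
  defines "H \<equiv> H_star n R \<gamma> c" and "C \<equiv> cost_sum n c"
  shows "((\<lambda>x. pi_star n R \<gamma> (c(k := x)) i) has_real_derivative
           profit_dc R \<gamma> (c i) H * (if i = k then 1 else 0)
           + profit_dH R \<gamma> (c i) H * (- H / (2 * \<gamma> * H + C))) (at (c k))"
proof -
  define S where "S = C - c k"
  have upd: "cost_sum n (c(k := x)) = x + S" for x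
    unfolding S_def C_def using cost_sum_fun_upd[OF assms(5)] .
  have f: "((\<lambda>x. (c(k := x)) i) has_real_derivative (if i = k then 1 else 0)) (at (c k))"
    by (cases "i = k") auto
  note g = has_real_derivative_H_star[OF assms(1-5), folded H_def C_def]
  have nz: "R + \<gamma> * (H_star n R \<gamma> (c(k := c k)))^2 \<noteq> 0"
    using reward_plus_capacity_pos[OF assms(1,2), of "H_star n R \<gamma> c"] by simp
  have "((\<lambda>x. profit R \<gamma> ((c(k := x)) i) (H_star n R \<gamma> (c(k := x)))) has_real_derivative
           profit_dc R \<gamma> (c i) H * (if i = k then 1 else 0)
           + profit_dH R \<gamma> (c i) H * (- H / (2 * \<gamma> * H + C))) (at (c k))"
    using has_real_derivative_profit[OF f g nz] unfolding H_def by (simp only: fun_upd_triv)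
  moreover have "c k \<in> {- S<..}" using assms(4) unfolding S_def C_def by simp
  moreover have "profit R \<gamma> ((c(k := x)) i) (H_star n R \<gamma> (c(k := x))) = pi_star n R \<gamma> (c(k := x)) i"
    if "x \<in> {- S<..}" for x
  proof -
    have "cost_sum n (c(k := x)) > 0" using that upd by simp
    then have "H_star n R \<gamma> (c(k := x)) > 0" by (rule H_star_pos[OF assms(1-3)])
    then show ?thesis using pi_star_eq_profit[OF assms(1,2)] by simp
  qed
  ultimately show ?thesis
    by (rule has_field_derivative_transform_within_open[OF _ open_greaterThan])
qed

theorem propositionB1:
  fixes N n i j :: nat and c :: "nat \<Rightarrow> real" and R \<gamma> :: real
  assumes "N \<ge> 2"
    and "\<forall>k\<in>{1..N}. c k > 0"
    and "\<forall>k\<in>{1..N}. \<forall>l\<in>{1..N}. k \<le> l \<longrightarrow> c k \<le> c l"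
    and "R > 0" and "\<gamma> \<ge> 0"
    and "2 \<le> n" and "n \<le> N"
    and "\<forall>k\<in>{1..n}. h_star n R \<gamma> c k > 0"
    and "is_nash N R \<gamma> c (\<lambda>k. if k \<in> {1..n} then h_star n R \<gamma> c k else 0)"
    and "i \<in> {1..n}" and "j \<in> {1..n}" and "i \<noteq> j"
  shows "(\<exists>D. ((\<lambda>x. pi_star n R \<gamma> (c(i := x)) i) has_real_derivative D) (at (c i)) \<and> D < 0)
       \<and> (\<exists>D. ((\<lambda>x. pi_star n R \<gamma> (c(j := x)) i) has_real_derivative D) (at (c j)) \<and> D > 0)"
proof -
  have cpos: "\<forall>k\<in>{1..n}. c k > 0" using assms(2,7) by auto
  have C: "cost_sum n c > 0" unfolding cost_sum_def using cpos assms(6) by (intro sum_pos) auto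
  define H where "H = H_star n R \<gamma> c"
  have "H > 0" unfolding H_def using H_star_pos[OF assms(4-6) C] .
  have margin: "c i * H < R"
    using h_star_pos_imp_margin_pos[OF assms(4,5), of n c i] \<open>H > 0\<close> assms(8,10)
    unfolding H_def by blast
  have ci: "c i > 0" using cpos assms(10) by blast
  have "profit_dc R \<gamma> (c i) H + profit_dH R \<gamma> (c i) H * (- H / (2 * \<gamma> * H + cost_sum n c)) < 0"
    using profit_own_cost_derivative_neg[OF assms(4,5) \<open>H > 0\<close> _ margin
        cost_sum_minus_pos[OF cpos assms(6,10)]] ci
    by simp
  then have own: "\<exists>D. ((\<lambda>x. pi_star n R \<gamma> (c(i := x)) i) has_real_derivative D) (at (c i)) \<and> D < 0"
    using has_real_derivative_pi_star[OF assms(4-6) C assms(10), of i, folded H_def] by auto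
  have "profit_dH R \<gamma> (c i) H < 0"
    using profit_dH_neg[OF assms(4,5) less_imp_le[OF \<open>H > 0\<close>] ci margin] .
  moreover have "- H / (2 * \<gamma> * H + cost_sum n c) < 0"
    using \<open>H > 0\<close> C assms(5) by (simp add: add_nonneg_pos)
  ultimately have "profit_dH R \<gamma> (c i) H * (- H / (2 * \<gamma> * H + cost_sum n c)) > 0"
    by (rule mult_neg_neg)
  then have other: "\<exists>D. ((\<lambda>x. pi_star n R \<gamma> (c(j := x)) i) has_real_derivative D) (at (c j)) \<and> D > 0"
    using has_real_derivative_pi_star[OF assms(4-6) C assms(11), of i, folded H_def] assms(12) by auto
  show ?thesis using own other by blast
qed

end
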